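(* Let $G=(Q,\Sigma,\delta_G,q_0,Q_m)$ be a DFA, $\Sigma_o$ a subset of $\Sigma$, $H=T_{\Sigma_o}(G)$, let $G'$ be a DFA with $G'\sqsubseteq G$, and $H'=T_{\Sigma_o}(G')$. If $match_{\Sigma_o}\leq\rho_{G,G'}$, then for all $s,s'\in L(H)$ with $s\equiv s'\bmod eq(H)$ we have $s\equiv s'\bmod eq(H')$.
   Context: DFA $G$, $L(G)=\{s:\delta_G(q_0,s)\text{ defined}\}$, natural projection $P_{\Sigma_o}$. $\epsilon R_G(q)=\{\delta_G(q,s):P_{\Sigma_o}(s)=\epsilon\}$. The observer $T_{\Sigma_o}(G)$ is the DFA over $\Sigma_o$ with subset states, initial state $\epsilon R_G(q_0)$, transitions $\delta(B,\sigma)=\bigcup_{q\in B,\ \delta_G(q,\sigma)\text{ defined}}\epsilon R_G(\delta_G(q,\sigma))$ (defined iff nonempty), accessible part. $G'\sqsubseteq G$ means $\delta_{G'}(q'_0,s)=\delta_G(q_0,s)$ for all $s\in L(G')$. For a DFA $K$ with initial state $k_0$, $eq(K)$ relates $s,s'$ iff $\delta_K(k_0,s)=\delta_K(k_0,s')$, both being undefined counting as equal. $match_{\Sigma_o}$ on $\Sigma^*$: $(s,s')\in match_{\Sigma_o}$ iff $s\equiv s'\bmod eq(G)$ and $P_{\Sigma_o}(s)\equiv P_{\Sigma_o}(s')\bmod eq(H)$, and if $s\notin L(G)$ then $(s,s')\in match_{\Sigma_o}$ iff $s'\notin L(G)$. $\rho_{G,G'}$ on $\Sigma^*$: $(s,s')\in\rho_{G,G'}$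 iff both lie in $L(G')$, or both lie in $L(G)\setminus L(G')$, or both lie in $\Sigma^*\setminus L(G)$. For binary relations $\rho_1,\rho_2$ on a set $X$, $\rho_1\leq\rho_2$ means $(x,y)\in\rho_1\Rightarrow(x,y)\in\rho_2$ for all $x,y$. *)

theory Defs
  imports Main
begin

record ('s, 'a) dfa =
  states :: "'s set"
  trans  :: "'s \<Rightarrow> 'a \<Rightarrow> 's option"
  init   :: "'s"
  marked :: "'s set"

definition is_dfa :: "('s, 'a) dfa \<Rightarrow> bool" where
  "is_dfa G \<longleftrightarrow> finite (states G) \<and> init G \<in> states G \<and> marked G \<subseteq> states G \<and>
     (\<forall>q\<in>states G. \<forall>\<sigma> q'. trans G q \<sigma> = Some q' \<longrightarrow> q' \<in> states G)"

fun delta_ext :: "('s, 'a) dfa \<Rightarrow> 's \<Rightarrow> 'a list \<Rightarrow> 's option" where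
  "delta_ext G q [] = Some q"
| "delta_ext G q (a # s) = (case trans G q a of None \<Rightarrow> None | Some q' \<Rightarrow> delta_ext G q' s)"

definition lang :: "('s, 'a) dfa \<Rightarrow> 'a list set" where
  "lang G = {s. delta_ext G (init G) s \<noteq> None}"

definition proj :: "'a set \<Rightarrow> 'a list \<Rightarrow> 'a list" where
  "proj \<Sigma>o s = filter (\<lambda>a. a \<in> \<Sigma>o) s"

definition epsR :: "('s, 'a) dfa \<Rightarrow> 'a set \<Rightarrow> 's \<Rightarrow> 's set" where
  "epsR G \<Sigma>o q = {q'. \<exists>s. proj \<Sigma>o s = [] \<and> delta_ext G q s = Some q'}"

definition obs_step :: "('s, 'a) dfa \<Rightarrow> 'a set \<Rightarrow> 's set \<Rightarrow> 'a \<Rightarrow> 's set option" where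
  "obs_step G \<Sigma>o B \<sigma> =
     (let B' = (\<Union>q\<in>{q\<in>B. trans G q \<sigma> \<noteq> None}. epsR G \<Sigma>o (the (trans G q \<sigma>)))
      in if \<sigma> \<in> \<Sigma>o \<and> B' \<noteq> {} then Some B' else None)"

definition obs_full :: "('s, 'a) dfa \<Rightarrow> 'a set \<Rightarrow> ('s set, 'a) dfa" where
  "obs_full G \<Sigma>o = \<lparr> states = UNIV, trans = obs_step G \<Sigma>o, init = epsR G \<Sigma>o (init G),
      marked = {B. B \<inter> marked G \<noteq> {}} \<rparr>"

definition obs_acc :: "('s, 'a) dfa \<Rightarrow> 'a set \<Rightarrow> 's set set" where
  "obs_acc G \<Sigma>o = {B. \<exists>t. delta_ext (obs_full G \<Sigma>o) (epsR G \<Sigma>o (init G)) t = Some B}"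

definition observer :: "'a set \<Rightarrow> ('s, 'a) dfa \<Rightarrow> ('s set, 'a) dfa" where
  "observer \<Sigma>o G = \<lparr> states = obs_acc G \<Sigma>o,
      trans = (\<lambda>B \<sigma>. if B \<in> obs_acc G \<Sigma>o then obs_step G \<Sigma>o B \<sigma> else None),
      init = epsR G \<Sigma>o (init G),
      marked = {B \<in> obs_acc G \<Sigma>o. B \<inter> marked G \<noteq> {}} \<rparr>"

definition subautomaton :: "('s, 'a) dfa \<Rightarrow> ('s, 'a) dfa \<Rightarrow> bool" where
  "subautomaton G' G \<longleftrightarrow> (\<forall>s\<in>lang G'. delta_ext G' (init G') s = delta_ext G (init G) s)"

text \<open>eq(K): both undefined counts as equal (None = None).\<close>
definition eqK :: "('s, 'a) dfa \<Rightarrow> 'a list \<Rightarrow> 'a list \<Rightarrow> bool" where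
  "eqK K s s' \<longleftrightarrow> delta_ext K (init K) s = delta_ext K (init K) s'"

definition match :: "'a set \<Rightarrow> ('s, 'a) dfa \<Rightarrow> 'a list \<Rightarrow> 'a list \<Rightarrow> bool" where
  "match \<Sigma>o G s s' \<longleftrightarrow>
     (if s \<in> lang G then eqK G s s' \<and> eqK (observer \<Sigma>o G) (proj \<Sigma>o s) (proj \<Sigma>o s')
      else s' \<notin> lang G)"

definition rho :: "('s, 'a) dfa \<Rightarrow> ('s, 'a) dfa \<Rightarrow> 'a list \<Rightarrow> 'a list \<Rightarrow> bool" where
  "rho G G' s s' \<longleftrightarrow>
     (s \<in> lang G' \<and> s' \<in> lang G') \<or>
     (s \<in> lang G - lang G' \<and> s' \<in> lang G - lang G') \<or>
     (s \<notin> lang G \<and> s' \<notin> lang G)"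

end

theory Submission
  imports Defs
begin

text \<open>The observer state reached along an observation t is the state estimate of t: the set
  of all states of G reached by words projecting to t. A state q of G lies in the estimate of G'
  iff some word w reaching q in G with proj w = t lies in L(G'). Since any other such word w' is
  matched with w, the hypothesis match \<le> rho makes this membership independent of the choice of w,
  so it depends only on q and the estimate of G at t. Hence equal estimates in G give equal
  estimates in G'.\<close>

definition state_estimate :: "('s, 'a) dfa \<Rightarrow> 'a set \<Rightarrow> 'a list \<Rightarrow> 's set" where
  "state_estimate G \<Sigma>o t = {q. \<exists>w. proj \<Sigma>o w = t \<and> delta_ext G (init G) w = Some q}"

lemma delta_ext_append:
  "delta_ext G q (u @ v) = (case delta_ext G q u of None \<Rightarrow> None | Some p \<Rightarrow> delta_ext G p v)"
  by (induction u arbitrary: q) (auto split: option.splits)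

lemma delta_ext_append_eq_Some:
  "delta_ext G q (u @ v) = Some x \<longleftrightarrow> (\<exists>p. delta_ext G q u = Some p \<and> delta_ext G p v = Some x)"
  by (auto simp: delta_ext_append split: option.splits)

lemma proj_eq_snocD:
  assumes "proj \<Sigma>o w = t @ [a]"
  shows "\<exists>u v. w = u @ a # v \<and> proj \<Sigma>o u = t \<and> proj \<Sigma>o v = [] \<and> a \<in> \<Sigma>o"
proof -
  have "filter (\<lambda>x. x \<in> \<Sigma>o) (rev w) = a # rev t"
    using assms by (simp add: proj_def flip: rev_filter)
  then obtain us vs where "rev w = us @ a # vs" "\<forall>x\<in>set us. x \<notin> \<Sigma>o" "a \<in> \<Sigma>o"
      "rev t = filter (\<lambda>x. x \<in> \<Sigma>o) vs"
    by (auto simp: filter_eq_Cons_iff)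
  moreover from \<open>rev w = us @ a # vs\<close> have "w = rev vs @ a # rev us"
    by (simp add: rev_swap)
  moreover from \<open>rev t = filter (\<lambda>x. x \<in> \<Sigma>o) vs\<close> have "proj \<Sigma>o (rev vs) = t"
    by (metis proj_def rev_filter rev_rev_ident)
  ultimately show ?thesis
    by (intro exI[of _ "rev vs"] exI[of _ "rev us"]) (auto simp: proj_def filter_empty_conv)
qed

lemma state_estimate_Nil: "state_estimate G \<Sigma>o [] = epsR G \<Sigma>o (init G)"
  by (simp add: state_estimate_def epsR_def)

lemma init_in_state_estimate_Nil: "init G \<in> state_estimate G \<Sigma>o []"
  by (auto simp: state_estimate_def proj_def intro: exI[of _ "[]"])

lemma state_estimate_snoc:
  "state_estimate G \<Sigma>o (t @ [a]) =
     (if a \<in> \<Sigma>o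
      then (\<Union>q\<in>{q\<in>state_estimate G \<Sigma>o t. trans G q a \<noteq> None}. epsR G \<Sigma>o (the (trans G q a)))
      else {})"
proof (cases "a \<in> \<Sigma>o")
  case False
  then show ?thesis by (auto simp: state_estimate_def dest: proj_eq_snocD)
next
  case True
  have "x \<in> state_estimate G \<Sigma>o (t @ [a]) \<longleftrightarrow>
      (\<exists>q p. q \<in> state_estimate G \<Sigma>o t \<and> trans G q a = Some p \<and> x \<in> epsR G \<Sigma>o p)" for x
  proof
    assume "x \<in> state_estimate G \<Sigma>o (t @ [a])"
    then obtain w where "proj \<Sigma>o w = t @ [a]" "delta_ext G (init G) w = Some x"
      by (auto simp: state_estimate_def)
    then obtain u v q p where "proj \<Sigma>o u = t" "delta_ext G (init G) u = Some q"
        "trans G q a = Some p" "proj \<Sigma>o v = []" "delta_ext G p v = Some x"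
      by (force dest: proj_eq_snocD simp: delta_ext_append_eq_Some split: option.splits)
    then show "\<exists>q p. q \<in> state_estimate G \<Sigma>o t \<and> trans G q a = Some p \<and> x \<in> epsR G \<Sigma>o p"
      by (auto simp: state_estimate_def epsR_def)
  next
    assume "\<exists>q p. q \<in> state_estimate G \<Sigma>o t \<and> trans G q a = Some p \<and> x \<in> epsR G \<Sigma>o p"
    then obtain u q p v where "proj \<Sigma>o u = t" "delta_ext G (init G) u = Some q"
        "trans G q a = Some p" "proj \<Sigma>o v = []" "delta_ext G p v = Some x"
      by (auto simp: state_estimate_def epsR_def)
    with True have "proj \<Sigma>o (u @ a # v) = t @ [a]" "delta_ext G (init G) (u @ a # v) = Some x"
      by (auto simp: proj_def delta_ext_append_eq_Some)
    then show "x \<in> state_estimate G \<Sigma>o (t @ [a])"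
      by (auto simp: state_estimate_def)
  qed
  with True show ?thesis
    by (auto; force)
qed

lemma obs_step_state_estimate:
  "obs_step G \<Sigma>o (state_estimate G \<Sigma>o t) a =
     (if state_estimate G \<Sigma>o (t @ [a]) = {} then None else Some (state_estimate G \<Sigma>o (t @ [a])))"
  by (auto simp: obs_step_def state_estimate_snoc Let_def)

lemma state_estimate_snoc_empty:
  "state_estimate G \<Sigma>o t = {} \<Longrightarrow> state_estimate G \<Sigma>o (t @ [a]) = {}"
  by (simp add: state_estimate_snoc)

lemma delta_ext_obs_full:
  "delta_ext (obs_full G \<Sigma>o) (epsR G \<Sigma>o (init G)) t =
     (if state_estimate G \<Sigma>o t = {} then None else Some (state_estimate G \<Sigma>o t))"
proof (induction t rule: rev_induct)
  case Nil
  then show ?case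
    using init_in_state_estimate_Nil[of G \<Sigma>o] by (auto simp: state_estimate_Nil)
next
  case (snoc a t)
  then show ?case
    by (auto simp: delta_ext_append obs_full_def obs_step_state_estimate
        dest: state_estimate_snoc_empty)
qed

lemma delta_ext_observer_eq_obs_full:
  "delta_ext (observer \<Sigma>o G) (init (observer \<Sigma>o G)) t =
     delta_ext (obs_full G \<Sigma>o) (epsR G \<Sigma>o (init G)) t"
proof (induction t rule: rev_induct)
  case Nil
  then show ?case by (simp add: observer_def)
next
  case (snoc a t)
  show ?case
  proof (cases "delta_ext (obs_full G \<Sigma>o) (epsR G \<Sigma>o (init G)) t")
    case None
    then show ?thesis using snoc by (simp add: delta_ext_append)
  next
    case (Some B)
    then have "B \<in> obs_acc G \<Sigma>o" by (auto simp: obs_acc_def)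
    with snoc Some show ?thesis
      by (simp add: delta_ext_append observer_def obs_full_def split: option.split)
  qed
qed

lemma delta_ext_observer:
  "delta_ext (observer \<Sigma>o G) (init (observer \<Sigma>o G)) t =
     (if state_estimate G \<Sigma>o t = {} then None else Some (state_estimate G \<Sigma>o t))"
  by (simp add: delta_ext_observer_eq_obs_full delta_ext_obs_full)

lemma eqK_observer_iff:
  "eqK (observer \<Sigma>o G) s s' \<longleftrightarrow> state_estimate G \<Sigma>o s = state_estimate G \<Sigma>o s'"
  by (simp add: eqK_def delta_ext_observer)

lemma state_estimate_subautomaton_subset:
  assumes sub: "subautomaton G' G" and match_rho: "match \<Sigma>o G \<le> rho G G'"
    and eq: "state_estimate G \<Sigma>o x = state_estimate G \<Sigma>o y"
  shows "state_estimate G' \<Sigma>o x \<subseteq> state_estimate G' \<Sigma>o y"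
proof
  fix q assume "q \<in> state_estimate G' \<Sigma>o x"
  then obtain w where w: "proj \<Sigma>o w = x" "delta_ext G' (init G') w = Some q"
    by (auto simp: state_estimate_def)
  then have w_G': "w \<in> lang G'" by (simp add: lang_def)
  with sub w have w_G: "delta_ext G (init G) w = Some q" by (simp add: subautomaton_def)
  with w eq have "q \<in> state_estimate G \<Sigma>o y" by (auto simp: state_estimate_def)
  then obtain w' where w': "proj \<Sigma>o w' = y" "delta_ext G (init G) w' = Some q"
    by (auto simp: state_estimate_def)
  have "eqK G w w'"
    using w_G w' by (simp add: eqK_def)
  moreover have "eqK (observer \<Sigma>o G) (proj \<Sigma>o w) (proj \<Sigma>o w')"
    using w w' eq by (simp add: eqK_observer_iff)
  ultimately have "match \<Sigma>o G w w'"
    using w_G by (simp add: match_def lang_def)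
  with match_rho have "rho G G' w w'" by (simp add: le_fun_def)
  with w_G' w_G have "w' \<in> lang G'" by (auto simp: rho_def lang_def)
  with sub w' have "delta_ext G' (init G') w' = Some q" by (simp add: subautomaton_def)
  with w' show "q \<in> state_estimate G' \<Sigma>o y" by (auto simp: state_estimate_def)
qed

theorem lemma5:
  fixes G G' :: "('s, 'a) dfa" and \<Sigma>o :: "'a set"
  assumes "is_dfa G" and "is_dfa G'"
    and "subautomaton G' G"
    and "match \<Sigma>o G \<le> rho G G'"
    and "s \<in> lang (observer \<Sigma>o G)" and "s' \<in> lang (observer \<Sigma>o G)"
    and "eqK (observer \<Sigma>o G) s s'"
  shows "eqK (observer \<Sigma>o G') s s'"
proof -
  have "state_estimate G \<Sigma>o s = state_estimate G \<Sigma>o s'"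
    using assms(7) by (simp add: eqK_observer_iff)
  with assms(3,4) have "state_estimate G' \<Sigma>o s = state_estimate G' \<Sigma>o s'"
    by (metis state_estimate_subautomaton_subset subset_antisym)
  then show ?thesis by (simp add: eqK_observer_iff)
qed

end
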